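(* A graph $G$ has exactly one L-Grundy dominating set (i.e., is a unique L-Grundy domination graph) if and only if $\gamma_{gr}^{L}(G)=n(G)$, where $n(G)$ is the number of vertices of $G$.
   Context: For a graph $G$, $N(v)$ is the open neighborhood and $N[v]=N(v)\cup\{v\}$ the closed neighborhood of $v$. A sequence $(v_1,\ldots,v_k)$ of distinct vertices is an L-sequence if $N[v_i]\setminus\bigcup_{j=1}^{i-1}N(v_j)\neq\emptyset$ for each $i\in[k]$. The L-Grundy domination number $\gamma_{gr}^{L}(G)$ is the maximum length of an L-sequence; the vertex set of such a maximum-length L-sequence is an L-Grundy dominating set. *)

theory Defs
  imports Main
begin

definition simple_graph :: "'a set \<Rightarrow> ('a \<Rightarrow> 'a \<Rightarrow> bool) \<Rightarrow> bool" where
  "simple_graph V E \<longleftrightarrow> finite V \<and> (\<forall>u v. E u v \<longrightarrow> u \<in> V \<and> v \<in> V)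
     \<and> (\<forall>u v. E u v \<longrightarrow> E v u) \<and> (\<forall>v. \<not> E v v)"

definition open_nbhd :: "'a set \<Rightarrow> ('a \<Rightarrow> 'a \<Rightarrow> bool) \<Rightarrow> 'a \<Rightarrow> 'a set" where
  "open_nbhd V E v = {u \<in> V. E v u}"

definition closed_nbhd :: "'a set \<Rightarrow> ('a \<Rightarrow> 'a \<Rightarrow> bool) \<Rightarrow> 'a \<Rightarrow> 'a set" where
  "closed_nbhd V E v = insert v (open_nbhd V E v)"

definition L_sequence :: "'a set \<Rightarrow> ('a \<Rightarrow> 'a \<Rightarrow> bool) \<Rightarrow> 'a list \<Rightarrow> bool" where
  "L_sequence V E xs \<longleftrightarrow> distinct xs \<and> set xs \<subseteq> V \<and>
     (\<forall>i < length xs. closed_nbhd V E (xs ! i) - (\<Union>j<i. open_nbhd V E (xs ! j)) \<noteq> {})"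

definition L_grundy_number :: "'a set \<Rightarrow> ('a \<Rightarrow> 'a \<Rightarrow> bool) \<Rightarrow> nat" where
  "L_grundy_number V E = Max {length xs | xs. L_sequence V E xs}"

definition L_grundy_dominating_sets :: "'a set \<Rightarrow> ('a \<Rightarrow> 'a \<Rightarrow> bool) \<Rightarrow> 'a set set" where
  "L_grundy_dominating_sets V E =
     {set xs | xs. L_sequence V E xs \<and> length xs = L_grundy_number V E}"

end

theory Submission
  imports Defs
begin

(* If a maximum L-sequence (x_1,...,x_k) misses a vertex u, then N[u] is already covered by the
   union of N(x_1),...,N(x_k), for otherwise u could be appended. Let x_m be the vertex whose
   neighbourhood completes this covering. Replacing x_m by u gives another L-sequence: u still has
   an undominated vertex of N[u] at position m, and every later vertex keeps its witness, because
   N(u) was covered by the time x_m was played, so the union of neighbourhoods in front of it does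
   not grow. This yields a second L-Grundy dominating set, containing u. Conversely, if the
   L-Grundy number is n(G), every L-Grundy dominating set is all of V. *)

lemma L_sequence_length_le_card:
  assumes "finite V" "L_sequence V E xs"
  shows "length xs \<le> card V"
proof -
  have "distinct xs" "set xs \<subseteq> V" using assms(2) by (auto simp: L_sequence_def)
  then show ?thesis using assms(1) by (metis card_mono distinct_card)
qed

lemma finite_L_sequence_lengths:
  assumes "finite V"
  shows "finite {length xs | xs. L_sequence V E xs}"
  by (rule finite_subset[of _ "{..card V}"]) (auto dest: L_sequence_length_le_card[OF assms])

lemma L_sequence_length_le_L_grundy_number:
  assumes "finite V" "L_sequence V E xs"
  shows "length xs \<le> L_grundy_number V E"
  unfolding L_grundy_number_def
  using assms(2) finite_L_sequence_lengths[OF assms(1)] by (auto intro: Max_ge)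

lemma ex_L_sequence_length_L_grundy_number:
  assumes "finite V"
  obtains xs where "L_sequence V E xs" "length xs = L_grundy_number V E"
proof -
  have "L_sequence V E []" by (simp add: L_sequence_def)
  then have "{length xs | xs. L_sequence V E xs} \<noteq> {}" by blast
  from Max_in[OF finite_L_sequence_lengths[OF assms] this] show ?thesis
    using that unfolding L_grundy_number_def by auto
qed

lemma L_sequence_snoc:
  assumes xs: "L_sequence V E xs" and u: "u \<in> V" "u \<notin> set xs"
    and new: "closed_nbhd V E u - (\<Union>j<length xs. open_nbhd V E (xs ! j)) \<noteq> {}"
  shows "L_sequence V E (xs @ [u])"
  unfolding L_sequence_def
proof (intro conjI allI impI)
  show "distinct (xs @ [u])" "set (xs @ [u]) \<subseteq> V"
    using xs u by (auto simp: L_sequence_def)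
  fix i assume "i < length (xs @ [u])"
  then consider "i < length xs" | "i = length xs" by fastforce
  then show "closed_nbhd V E ((xs @ [u]) ! i) - (\<Union>j<i. open_nbhd V E ((xs @ [u]) ! j)) \<noteq> {}"
  proof cases
    case 1
    then have "(\<Union>j<i. open_nbhd V E ((xs @ [u]) ! j)) = (\<Union>j<i. open_nbhd V E (xs ! j))"
      by (auto simp: nth_append)
    with 1 xs show ?thesis by (simp add: L_sequence_def nth_append)
  next
    case 2
    then have "(\<Union>j<i. open_nbhd V E ((xs @ [u]) ! j)) = (\<Union>j<length xs. open_nbhd V E (xs ! j))"
      by (auto simp: nth_append)
    with 2 new show ?thesis by simp
  qed
qed

lemma L_sequence_list_update:
  assumes xs: "L_sequence V E xs" and m: "m < length xs" and u: "u \<in> V" "u \<notin> set xs"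
    and new: "closed_nbhd V E u - (\<Union>j<m. open_nbhd V E (xs ! j)) \<noteq> {}"
    and covered: "open_nbhd V E u \<subseteq> (\<Union>j\<le>m. open_nbhd V E (xs ! j))"
  shows "L_sequence V E (xs[m := u])"
  unfolding L_sequence_def
proof (intro conjI allI impI)
  have "distinct xs" "set xs \<subseteq> V" using xs by (auto simp: L_sequence_def)
  then show "distinct (xs[m := u])" "set (xs[m := u]) \<subseteq> V"
    using u by (simp_all add: distinct_list_update set_update_subsetI)
  have nth_update: "xs[m := u] ! j = (if j = m then u else xs ! j)" for j
    using m by simp
  fix i assume i: "i < length (xs[m := u])"
  consider "i < m" | "i = m" | "m < i" by fastforce
  then show "closed_nbhd V E (xs[m := u] ! i) - (\<Union>j<i. open_nbhd V E (xs[m := u] ! j)) \<noteq> {}"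
  proof cases
    case 1
    then have "(\<Union>j<i. open_nbhd V E (xs[m := u] ! j)) = (\<Union>j<i. open_nbhd V E (xs ! j))"
      by (auto simp: nth_update)
    with 1 i xs show ?thesis by (simp add: L_sequence_def nth_update)
  next
    case 2
    then have "(\<Union>j<i. open_nbhd V E (xs[m := u] ! j)) = (\<Union>j<m. open_nbhd V E (xs ! j))"
      by (auto simp: nth_update)
    with 2 new show ?thesis by (simp add: nth_update)
  next
    case 3
    have "open_nbhd V E u \<subseteq> (\<Union>j<i. open_nbhd V E (xs ! j))"
      using covered 3 by fastforce
    then have "(\<Union>j<i. open_nbhd V E (xs[m := u] ! j)) \<subseteq> (\<Union>j<i. open_nbhd V E (xs ! j))"
      unfolding nth_update by (smt (verit) UN_iff subsetD subsetI)
    moreover have "closed_nbhd V E (xs ! i) - (\<Union>j<i. open_nbhd V E (xs ! j)) \<noteq> {}"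
      using xs i by (simp add: L_sequence_def)
    ultimately show ?thesis using 3 by (auto simp: nth_update)
  qed
qed

lemma maximum_L_sequence_exchange:
  assumes "finite V" and xs: "L_sequence V E xs" "length xs = L_grundy_number V E"
    and u: "u \<in> V" "u \<notin> set xs"
  obtains ys where "L_sequence V E ys" "length ys = length xs" "u \<in> set ys"
proof -
  define covers where "covers n \<longleftrightarrow> closed_nbhd V E u \<subseteq> (\<Union>j<n. open_nbhd V E (xs ! j))" for n
  have "covers (length xs)"
  proof (rule ccontr)
    assume "\<not> covers (length xs)"
    then have "L_sequence V E (xs @ [u])"
      using L_sequence_snoc[OF xs(1) u] by (auto simp: covers_def)
    from L_sequence_length_le_L_grundy_number[OF assms(1) this] xs(2) show False by simp
  qed
  moreover have "\<not> covers 0" by (simp add: covers_def closed_nbhd_def)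
  ultimately obtain m where m: "m < length xs" "\<not> covers m" "covers (Suc m)"
    using ex_least_nat_less[of covers] by blast
  have "L_sequence V E (xs[m := u])"
  proof (rule L_sequence_list_update[OF xs(1) m(1) u])
    show "closed_nbhd V E u - (\<Union>j<m. open_nbhd V E (xs ! j)) \<noteq> {}"
      using m(2) by (simp add: covers_def)
    show "open_nbhd V E u \<subseteq> (\<Union>j\<le>m. open_nbhd V E (xs ! j))"
      using m(3) by (auto simp: covers_def closed_nbhd_def lessThan_Suc_atMost)
  qed
  then show ?thesis using that m(1) by (simp add: set_update_memI)
qed

lemma L_grundy_dominating_set_eq_vertices:
  assumes "finite V" "L_grundy_number V E = card V" "S \<in> L_grundy_dominating_sets V E"
  shows "S = V"
proof -
  obtain xs where xs: "S = set xs" "L_sequence V E xs" "length xs = card V"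
    using assms(2,3) unfolding L_grundy_dominating_sets_def by auto
  then have "distinct xs" "set xs \<subseteq> V" by (auto simp: L_sequence_def)
  with xs assms(1) show ?thesis by (metis card_subset_eq distinct_card)
qed

theorem corollary6p3:
  fixes V :: "'a set" and E :: "'a \<Rightarrow> 'a \<Rightarrow> bool"
  assumes "simple_graph V E"
  shows "(\<exists>!S. S \<in> L_grundy_dominating_sets V E) \<longleftrightarrow> L_grundy_number V E = card V"
proof -
  have fin: "finite V" using assms by (simp add: simple_graph_def)
  obtain xs where xs: "L_sequence V E xs" "length xs = L_grundy_number V E"
    using ex_L_sequence_length_L_grundy_number[OF fin] .
  then have xs_dom: "set xs \<in> L_grundy_dominating_sets V E"
    unfolding L_grundy_dominating_sets_def by auto
  show ?thesis
  proof
    assume unique: "\<exists>!S. S \<in> L_grundy_dominating_sets V E"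
    have "set xs = V"
    proof (rule ccontr)
      assume "set xs \<noteq> V"
      then obtain u where u: "u \<in> V" "u \<notin> set xs" using xs(1) by (auto simp: L_sequence_def)
      obtain ys where "L_sequence V E ys" "length ys = length xs" "u \<in> set ys"
        using maximum_L_sequence_exchange[OF fin xs u] .
      then have "set ys \<in> L_grundy_dominating_sets V E" "set ys \<noteq> set xs"
        using xs(2) u(2) unfolding L_grundy_dominating_sets_def by auto
      with xs_dom unique show False by blast
    qed
    with xs show "L_grundy_number V E = card V" by (metis L_sequence_def distinct_card)
  next
    assume "L_grundy_number V E = card V"
    with xs_dom show "\<exists>!S. S \<in> L_grundy_dominating_sets V E"
      using L_grundy_dominating_set_eq_vertices[OF fin] by blast
  qed
qed

end
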